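(* Let $n\ge 1$ be an integer and let $U_{6n}=\langle a,b : a^{2n}=b^3=1,\ a^{-1}ba=b^{-1}\rangle$ (a group of order $6n$). Let $\Gamma_{U_{6n}}$ be its non-commuting graph. Then the spectrum of the distance Laplacian matrix $D^L(\Gamma_{U_{6n}})$ (eigenvalues counted with multiplicity, multiplicities being added if two of the listed values coincide) consists of: (a) $0$ with multiplicity $1$; (b) $5n$ with multiplicity $3$; (c) $6n$ with multiplicity $3(n-1)$; (d) $7n$ with multiplicity $2n-1$.
   Context: For a finite non-abelian group $G$ with centre $Z(G)$, the non-commuting graph $\Gamma_G$ is the simple undirected graph with vertex set $G\setminus Z(G)$, in which two distinct vertices $u,v$ are adjacent if and only if $uv\ne vu$. For a connected graph $H$, $d_{uv}$ denotes the length of a shortest path between $u$ and $v$; the distance matrix $D(H)$ has $(u,v)$-entry $d_{uv}$. The transmission of a vertex $v$ is $\sum_{u} d_{uv}$, and $Tr(H)$ is the diagonal matrix of vertex transmissions. The distance Laplacian matrix is $D^L(H)=Tr(H)-D(H)$. *)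

theory Defs
  imports "Jordan_Normal_Form.Char_Poly"
begin

text \<open>The group U_{6n} = <a,b | a^(2n) = b^3 = 1, a^-1 b a = b^-1>, realised concretely:
  the element a^i b^j (0 <= i < 2n, 0 <= j < 3) is represented by the pair (i,j).
  From b a = a b^-1 we get b^j a^i = a^i b^((-1)^i j), hence
  (a^i1 b^j1)(a^i2 b^j2) = a^(i1+i2) b^((-1)^i2 j1 + j2).\<close>

definition U6n_carrier :: "nat \<Rightarrow> (nat \<times> nat) set" where
  "U6n_carrier n = {0..<2*n} \<times> {0..<3}"

definition U6n_mult :: "nat \<Rightarrow> nat \<times> nat \<Rightarrow> nat \<times> nat \<Rightarrow> nat \<times> nat" where
  "U6n_mult n x y = ((fst x + fst y) mod (2*n),
                     ((if even (fst y) then snd x else 2 * snd x) + snd y) mod 3)"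

definition centre :: "'a set \<Rightarrow> ('a \<Rightarrow> 'a \<Rightarrow> 'a) \<Rightarrow> 'a set" where
  "centre G m = {z \<in> G. \<forall>g\<in>G. m z g = m g z}"

definition nc_vertices :: "'a set \<Rightarrow> ('a \<Rightarrow> 'a \<Rightarrow> 'a) \<Rightarrow> 'a set" where
  "nc_vertices G m = G - centre G m"

definition nc_adj :: "'a set \<Rightarrow> ('a \<Rightarrow> 'a \<Rightarrow> 'a) \<Rightarrow> 'a \<Rightarrow> 'a \<Rightarrow> bool" where
  "nc_adj G m u v \<longleftrightarrow> u \<in> nc_vertices G m \<and> v \<in> nc_vertices G m \<and> u \<noteq> v \<and> m u v \<noteq> m v u"

definition is_walk :: "'a set \<Rightarrow> ('a \<Rightarrow> 'a \<Rightarrow> bool) \<Rightarrow> 'a list \<Rightarrow> bool" where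
  "is_walk V E xs \<longleftrightarrow> xs \<noteq> [] \<and> set xs \<subseteq> V \<and> (\<forall>i. Suc i < length xs \<longrightarrow> E (xs ! i) (xs ! Suc i))"

definition gdist :: "'a set \<Rightarrow> ('a \<Rightarrow> 'a \<Rightarrow> bool) \<Rightarrow> 'a \<Rightarrow> 'a \<Rightarrow> nat" where
  "gdist V E u v = (LEAST k. \<exists>xs. is_walk V E xs \<and> hd xs = u \<and> last xs = v \<and> length xs = Suc k)"

definition transmission :: "'a set \<Rightarrow> ('a \<Rightarrow> 'a \<Rightarrow> bool) \<Rightarrow> 'a \<Rightarrow> nat" where
  "transmission V E v = (\<Sum>u\<in>V. gdist V E u v)"

text \<open>Distance Laplacian D^L = Tr - D, as a matrix w.r.t. some fixed enumeration of V
  (the characteristic polynomial does not depend on the enumeration).\<close>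

definition vertex_list :: "'a set \<Rightarrow> 'a list" where
  "vertex_list V = (SOME xs. distinct xs \<and> set xs = V)"

definition dist_laplacian :: "'a set \<Rightarrow> ('a \<Rightarrow> 'a \<Rightarrow> bool) \<Rightarrow> real mat" where
  "dist_laplacian V E = (let vs = vertex_list V in
     mat (length vs) (length vs)
       (\<lambda>(i, j). (if i = j then real (transmission V E (vs ! i)) else 0)
                 - real (gdist V E (vs ! i) (vs ! j))))"

end

theory Submission
  imports Defs
begin

(* The non-central elements of U_6n are the a^i b^j with i odd or j \<noteq> 0, and two of them commute
   exactly when they lie in the same one of the classes {a^i b^j : i even} and {a^i b^j : i odd}
   for j = 0, 1, 2. So the non-commuting graph is the complete multipartite graph K_(2n,n,n,n),
   with N = 5n vertices in k = 4 parts, at distance 1 across parts and 2 inside a part. Thus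
   x I - D^L has diagonal entries x - N - m + 2 on a part of size m, and off-diagonal entries 2
   inside the parts and 1 between them.
   Fix a representative of each part. Subtracting from each row the row of its representative and
   adding each column to the column of its representative makes this matrix block lower triangular,
   with diagonal entries x - N - m_t at the non-representatives and the block (x - N) I + 1 m^T at
   the representatives, whose determinant is x (x - N)^(k - 1). Hence the characteristic polynomial
   is x (x - N)^(k - 1) times the product of (x - N - m_t)^(m_t - 1) over the parts. *)

section \<open>Reindexing and triangular determinants\<close>

lemma det_reindex:
  assumes A: "A \<in> carrier_mat n n" and p: "p permutes {..<n}"
  shows "det (mat n n (\<lambda>(i, j). A $$ (p i, p j))) = det A"
proof -
  have p': "p permutes {0..<n}" using p by (simp add: atLeast0LessThan)
  define B where "B = mat n n (\<lambda>(i, j). A $$ (p i, j))"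
  have B: "B \<in> carrier_mat n n" by (simp add: B_def)
  have pn: "i < n \<Longrightarrow> p i < n" for i using permutes_in_image[OF p, of i] by simp
  have "mat n n (\<lambda>(i, j). A $$ (p i, p j)) = transpose_mat (mat n n (\<lambda>(i, j). transpose_mat B $$ (p i, j)))"
    by (rule eq_matI) (auto simp: B_def pn)
  then have "det (mat n n (\<lambda>(i, j). A $$ (p i, p j))) = det (mat n n (\<lambda>(i, j). transpose_mat B $$ (p i, j)))"
    by (simp add: det_transpose[of _ n])
  also have "\<dots> = signof p * det (transpose_mat B)"
    using B p' by (intro det_permute_rows) auto
  also have "\<dots> = signof p * (signof p * det A)"
    unfolding det_transpose[OF B] unfolding B_def det_permute_rows[OF A p'] ..
  also have "\<dots> = det A" by (cases p rule: sign_cases) auto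
  finally show ?thesis .
qed

lemma char_poly_reindex:
  assumes A: "A \<in> carrier_mat n n" and p: "p permutes {..<n}"
  shows "char_poly (mat n n (\<lambda>(i, j). A $$ (p i, p j))) = char_poly A"
proof -
  have pn: "i < n \<Longrightarrow> p i < n" for i using permutes_in_image[OF p, of i] by simp
  have "char_poly_matrix (mat n n (\<lambda>(i, j). A $$ (p i, p j)))
      = mat n n (\<lambda>(i, j). char_poly_matrix A $$ (p i, p j))"
    using A by (intro eq_matI) (auto simp: char_poly_matrix_def pn permutes_inj[OF p, THEN inj_eq])
  then show ?thesis
    using det_reindex[OF char_poly_matrix_closed[OF A] p] by (simp add: char_poly_def)
qed

lemma char_poly_mat_of_enumeration:
  assumes "distinct xs" "distinct ys" "set xs = set ys"
  shows "char_poly (mat (length xs) (length xs) (\<lambda>(i, j). f (xs ! i) (xs ! j)))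
       = char_poly (mat (length ys) (length ys) (\<lambda>(i, j). f (ys ! i) (ys ! j)))"
proof -
  have "mset xs = mset ys" using assms set_eq_iff_mset_eq_distinct by blast
  then obtain p where p: "p permutes {..<length ys}" and xs: "permute_list p ys = xs"
    by (rule mset_eq_permutation)
  have len: "length xs = length ys" using \<open>mset xs = mset ys\<close> by (rule mset_eq_length)
  have pn: "i < length ys \<Longrightarrow> p i < length ys" for i using permutes_in_image[OF p, of i] by simp
  have "mat (length xs) (length xs) (\<lambda>(i, j). f (xs ! i) (xs ! j))
      = mat (length ys) (length ys) (\<lambda>(i, j). mat (length ys) (length ys) (\<lambda>(i, j). f (ys ! i) (ys ! j)) $$ (p i, p j))"
    using p by (intro eq_matI) (auto simp: len xs[symmetric] permute_list_nth pn)
  then show ?thesis by (simp add: char_poly_reindex[OF _ p])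
qed

lemma det_unit_upper_triangular:
  assumes A: "A \<in> carrier_mat n n"
    and diag: "\<And>i. i < n \<Longrightarrow> A $$ (i, i) = 1"
    and lower: "\<And>i j. j < i \<Longrightarrow> i < n \<Longrightarrow> A $$ (i, j) = 0"
  shows "det A = 1"
proof -
  have "det A = prod_list (diag_mat A)"
    using A lower by (intro det_upper_triangular[of _ n]) (auto simp: upper_triangular_def)
  also have "\<dots> = 1" using A diag by (simp add: prod_list_diag_prod)
  finally show ?thesis .
qed

lemma det_diagonal_mat: "det (mat n n (\<lambda>(i, j). if i = j then f i else 0)) = (\<Prod>i<n. f i)"
proof -
  have "det (mat n n (\<lambda>(i, j). if i = j then f i else 0))
      = prod_list (diag_mat (mat n n (\<lambda>(i, j). if i = j then f i else 0)))"
    by (intro det_upper_triangular[of _ n]) (auto simp: upper_triangular_def)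
  then show ?thesis by (simp add: prod_list_diag_prod atLeast0LessThan)
qed

lemma prod_comp_eq_prod_power_card:
  assumes "finite A" "finite T" "p ` A \<subseteq> T"
  shows "(\<Prod>i\<in>A. f (p i)) = (\<Prod>t\<in>T. f t ^ card {i \<in> A. p i = t})"
proof -
  have "(\<Prod>i\<in>A. f (p i)) = (\<Prod>t\<in>T. \<Prod>i | i \<in> A \<and> p i = t. f (p i))"
    using assms by (rule prod.group[symmetric])
  also have "\<dots> = (\<Prod>t\<in>T. \<Prod>i | i \<in> A \<and> p i = t. f t)"
    by (intro prod.cong) auto
  also have "\<dots> = (\<Prod>t\<in>T. f t ^ card {i \<in> A. p i = t})"
    by simp
  finally show ?thesis .
qed

section \<open>Diagonal plus block-constant matrices\<close>

(* For i < M the index M + p i represents the part of i: right multiplication by 1 + rep_mat adds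
   every column to the column of its representative, left multiplication by 1 - rep_mat subtracts
   from every row the row of its representative. *)
definition rep_mat :: "nat \<Rightarrow> nat \<Rightarrow> (nat \<Rightarrow> nat) \<Rightarrow> 'a::comm_ring_1 mat" where
  "rep_mat N M p = mat N N (\<lambda>(i, j). of_bool (i < M \<and> j = M + p i))"

lemma rep_mat_carrier [simp]: "rep_mat N M p \<in> carrier_mat N N"
  by (simp add: rep_mat_def)

lemma det_one_plus_rep_mat: "det (1\<^sub>m N + rep_mat N M p) = 1"
  by (rule det_unit_upper_triangular[of _ N]) (auto simp: rep_mat_def)

lemma det_one_minus_rep_mat: "det (1\<^sub>m N - rep_mat N M p) = 1"
  by (rule det_unit_upper_triangular[of _ N]) (auto simp: rep_mat_def)

lemma index_mult_one_plus_rep_mat: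
  assumes "A \<in> carrier_mat n N" "i < n" "j < N" "M \<le> N"
  shows "(A * (1\<^sub>m N + rep_mat N M p)) $$ (i, j) = A $$ (i, j) + (\<Sum>l | l < M \<and> M + p l = j. A $$ (i, l))"
proof -
  have restrict: "{..<N} \<inter> {l. l < M \<and> M + p l = j} = {l. l < M \<and> M + p l = j}"
    using assms(4) by auto
  have "(A * (1\<^sub>m N + rep_mat N M p)) $$ (i, j)
      = (\<Sum>l<N. A $$ (i, l) * (of_bool (l = j) + of_bool (l < M \<and> j = M + p l)))"
    using assms by (simp add: rep_mat_def scalar_prod_def atLeast0LessThan of_bool_def)
  also have "\<dots> = A $$ (i, j) + (\<Sum>l | l < M \<and> M + p l = j. A $$ (i, l))"
    using assms by (simp add: distrib_left sum.distrib eq_commute[of j] sum.inter_restrict restrict)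
  finally show ?thesis .
qed

lemma index_one_minus_rep_mat_mult:
  assumes "A \<in> carrier_mat N n" "i < N" "j < n" "i < M \<Longrightarrow> M + p i < N"
  shows "((1\<^sub>m N - rep_mat N M p) * A) $$ (i, j) = A $$ (i, j) - (if i < M then A $$ (M + p i, j) else 0)"
proof -
  have "((1\<^sub>m N - rep_mat N M p) * A) $$ (i, j)
      = (\<Sum>l<N. (of_bool (i = l) - of_bool (i < M \<and> l = M + p i)) * A $$ (l, j))"
    using assms by (simp add: rep_mat_def scalar_prod_def atLeast0LessThan of_bool_def)
  also have "\<dots> = A $$ (i, j) - (if i < M then A $$ (M + p i, j) else 0)"
    using assms by (simp add: left_diff_distrib sum_subtractf)
  finally show ?thesis .
qed

definition diag_plus_block_mat ::
    "nat \<Rightarrow> (nat \<Rightarrow> nat) \<Rightarrow> (nat \<Rightarrow> 'a) \<Rightarrow> (nat \<Rightarrow> nat \<Rightarrow> 'a) \<Rightarrow> 'a::comm_ring_1 mat" where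
  "diag_plus_block_mat N p d c = mat N N (\<lambda>(i, j). (if i = j then d (p i) else 0) + c (p i) (p j))"

lemma diag_plus_block_mat_carrier [simp]: "diag_plus_block_mat N p d c \<in> carrier_mat N N"
  by (simp add: diag_plus_block_mat_def)

lemma sum_part_diag_plus_block_mat:
  assumes "i < N"
  shows "(\<Sum>l | l < N \<and> p l = t. diag_plus_block_mat N p d c $$ (i, l))
       = (if p i = t then d (p i) else 0) + of_nat (card {l. l < N \<and> p l = t}) * c (p i) t"
proof -
  have "(\<Sum>l | l < N \<and> p l = t. diag_plus_block_mat N p d c $$ (i, l))
      = (\<Sum>l | l < N \<and> p l = t. (if l = i then d (p i) else 0) + c (p i) t)"
    using assms by (intro sum.cong) (auto simp: diag_plus_block_mat_def)
  also have "\<dots> = (if p i = t then d (p i) else 0) + of_nat (card {l. l < N \<and> p l = t}) * c (p i) t"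
    using assms by (simp add: sum.distrib)
  finally show ?thesis .
qed

context
  fixes N k :: nat and p :: "nat \<Rightarrow> nat"
  assumes k_le_N: "k \<le> N"
    and part_less: "\<And>i. i < N \<Longrightarrow> p i < k"
    and part_last: "\<And>t. t < k \<Longrightarrow> p (N - k + t) = t"
begin

lemma index_eq_last_of_part: "N - k \<le> l \<Longrightarrow> l < N \<Longrightarrow> l = N - k + p l"
  using part_last[of "l - (N - k)"] k_le_N by simp

lemma part_eq_insert_last:
  assumes "N - k \<le> j" "j < N"
  shows "{l. l < N \<and> p l = p j} = insert j {l. l < N - k \<and> N - k + p l = j}"
proof -
  have j: "j = N - k + p j" using index_eq_last_of_part assms .
  have "l = j" if "N - k \<le> l" "l < N" "p l = p j" for l
    using index_eq_last_of_part[OF that(1,2)] that(3) j by simp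
  then show ?thesis using j \<open>j < N\<close> by auto (meson leI)
qed

lemma index_mult_one_plus_rep_mat_part:
  assumes "A \<in> carrier_mat n N" "i < n" "j < N"
  shows "(A * (1\<^sub>m N + rep_mat N (N - k) p)) $$ (i, j)
       = (if j < N - k then A $$ (i, j) else (\<Sum>l | l < N \<and> p l = p j. A $$ (i, l)))"
proof -
  have eq: "(A * (1\<^sub>m N + rep_mat N (N - k) p)) $$ (i, j)
      = A $$ (i, j) + (\<Sum>l | l < N - k \<and> N - k + p l = j. A $$ (i, l))"
    using assms by (rule index_mult_one_plus_rep_mat) simp
  show ?thesis
  proof (cases "j < N - k")
    case True
    then have empty: "{l. l < N - k \<and> N - k + p l = j} = {}" by auto
    show ?thesis unfolding eq empty using True by simp
  next
    case False
    then show ?thesis unfolding eq using part_eq_insert_last[of j] assms(3) by simp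
  qed
qed

lemma index_reduced_diag_plus_block_mat:
  fixes d :: "nat \<Rightarrow> 'a::comm_ring_1" and c :: "nat \<Rightarrow> nat \<Rightarrow> 'a"
  defines "Y \<equiv> (1\<^sub>m N - rep_mat N (N - k) p) * (diag_plus_block_mat N p d c * (1\<^sub>m N + rep_mat N (N - k) p))"
  shows "\<And>i j. i < N - k \<Longrightarrow> j < N \<Longrightarrow> Y $$ (i, j) = (if i = j then d (p i) else 0)"
    and "\<And>s t. s < k \<Longrightarrow> t < k \<Longrightarrow> Y $$ (N - k + s, N - k + t)
           = (if s = t then d s else 0) + of_nat (card {l. l < N \<and> p l = t}) * c s t"
proof -
  let ?K = "diag_plus_block_mat N p d c"
  let ?X = "?K * (1\<^sub>m N + rep_mat N (N - k) p)"
  have X: "?X \<in> carrier_mat N N" by (rule mult_carrier_mat[of _ N N]) auto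
  have last_less: "N - k + p i < N" if "i < N" for i using part_less[OF that] k_le_N by simp
  have Y: "Y $$ (i, j) = ?X $$ (i, j) - (if i < N - k then ?X $$ (N - k + p i, j) else 0)"
    if "i < N" "j < N" for i j
    unfolding Y_def using X that last_less[OF that(1)] by (rule index_one_minus_rep_mat_mult)
  have X_index: "?X $$ (i, j) = (if j < N - k then ?K $$ (i, j) else (\<Sum>l | l < N \<and> p l = p j. ?K $$ (i, l)))"
    if "i < N" "j < N" for i j
    using diag_plus_block_mat_carrier that by (rule index_mult_one_plus_rep_mat_part)
  show "Y $$ (i, j) = (if i = j then d (p i) else 0)" if "i < N - k" "j < N" for i j
  proof -
    have i: "i < N" using that by simp
    have r: "N - k + p i < N" and pr: "p (N - k + p i) = p i"
      using last_less[OF i] part_last[OF part_less[OF i]] by simp_all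
    show ?thesis
    proof (cases "j < N - k")
      case True
      then show ?thesis
        using that r pr unfolding Y[OF i \<open>j < N\<close>] X_index[OF i \<open>j < N\<close>] X_index[OF r \<open>j < N\<close>]
        by (simp add: diag_plus_block_mat_def)
    next
      case False
      then show ?thesis
        using that r pr unfolding Y[OF i \<open>j < N\<close>] X_index[OF i \<open>j < N\<close>] X_index[OF r \<open>j < N\<close>]
          sum_part_diag_plus_block_mat[OF i] sum_part_diag_plus_block_mat[OF r] pr by simp
    qed
  qed
  show "Y $$ (N - k + s, N - k + t)
      = (if s = t then d s else 0) + of_nat (card {l. l < N \<and> p l = t}) * c s t"
    if "s < k" "t < k" for s t
  proof -
    have st: "N - k + s < N" "N - k + t < N" using that k_le_N by auto
    show ?thesis
      using that part_last[of s] part_last[of t]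
      unfolding Y[OF st] X_index[OF st] sum_part_diag_plus_block_mat[OF st(1)] by simp
  qed
qed

lemma det_diag_plus_block_mat:
  fixes d :: "nat \<Rightarrow> 'a::idom" and c :: "nat \<Rightarrow> nat \<Rightarrow> 'a"
  shows "det (diag_plus_block_mat N p d c) = (\<Prod>i<N - k. d (p i))
    * det (mat k k (\<lambda>(s, t). (if s = t then d s else 0) + of_nat (card {l. l < N \<and> p l = t}) * c s t))"
proof -
  let ?E = "rep_mat N (N - k) p" and ?K = "diag_plus_block_mat N p d c"
  let ?Y = "(1\<^sub>m N - ?E) * (?K * (1\<^sub>m N + ?E))"
  let ?D = "mat (N - k) (N - k) (\<lambda>(i, j). if i = j then d (p i) else 0)"
  let ?Q = "mat k k (\<lambda>(s, t). (if s = t then d s else 0) + of_nat (card {l. l < N \<and> p l = t}) * c s t)"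
  define C where "C = mat k (N - k) (\<lambda>(s, j). ?Y $$ (N - k + s, j))"
  have blocks: "?Y = four_block_mat ?D (0\<^sub>m (N - k) k) C ?Q"
  proof (rule eq_matI)
    fix i j assume "i < dim_row (four_block_mat ?D (0\<^sub>m (N - k) k) C ?Q)"
      and "j < dim_col (four_block_mat ?D (0\<^sub>m (N - k) k) C ?Q)"
    then have ij: "i < N" "j < N" using k_le_N by simp_all
    show "?Y $$ (i, j) = four_block_mat ?D (0\<^sub>m (N - k) k) C ?Q $$ (i, j)"
    proof (cases "i < N - k")
      case True
      then show ?thesis using ij index_reduced_diag_plus_block_mat(1)[of i j d c] by auto
    next
      case False
      then show ?thesis
        using ij index_reduced_diag_plus_block_mat(2)[of "i - (N - k)" "j - (N - k)" d c]
        by (auto simp: C_def)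
    qed
  qed (use k_le_N in \<open>simp_all add: rep_mat_def\<close>)
  have carrier: "1\<^sub>m N - ?E \<in> carrier_mat N N" "1\<^sub>m N + ?E \<in> carrier_mat N N"
    "?K * (1\<^sub>m N + ?E) \<in> carrier_mat N N"
    by (auto intro!: minus_carrier_mat mult_carrier_mat[of _ N N])
  have "det ?K = det ?Y"
    by (simp add: det_mult[OF carrier(1,3)] det_mult[OF _ carrier(2)] det_one_plus_rep_mat det_one_minus_rep_mat)
  also have "\<dots> = det ?D * det ?Q"
    unfolding blocks by (rule det_four_block_mat_upper_right_zero) (auto simp: C_def)
  finally show ?thesis by (simp add: det_diagonal_mat)
qed

lemma prod_nonrepresentatives:
  shows "(\<Prod>i<N - k. f (p i)) = (\<Prod>t<k. f t ^ (card {i. i < N \<and> p i = t} - 1))"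
proof -
  have "{i. i < N \<and> p i = t} = insert (N - k + t) {i. i < N - k \<and> p i = t}" if "t < k" for t
  proof (intro equalityI subsetI)
    fix i assume i: "i \<in> {i. i < N \<and> p i = t}"
    show "i \<in> insert (N - k + t) {i. i < N - k \<and> p i = t}"
    proof (cases "i < N - k")
      case False
      then have "i - (N - k) < k" "N - k + (i - (N - k)) = i" using i by auto
      then have "i = N - k + t" using part_last[of "i - (N - k)"] i by simp
      then show ?thesis by simp
    qed (use i in simp)
  qed (use that part_last[of t] k_le_N in auto)
  then have card: "card {i \<in> {..<N - k}. p i = t} = card {i. i < N \<and> p i = t} - 1" if "t < k" for t
    using that by simp
  have "(\<Prod>i<N - k. f (p i)) = (\<Prod>t<k. f t ^ card {i \<in> {..<N - k}. p i = t})"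
    using part_less by (intro prod_comp_eq_prod_power_card) auto
  also have "\<dots> = (\<Prod>t<k. f t ^ (card {i. i < N \<and> p i = t} - 1))"
    using card by (intro prod.cong) auto
  finally show ?thesis .
qed

end

lemma index_mult_upper_ones_mat:
  fixes A :: "'a::comm_ring_1 mat"
  assumes "A \<in> carrier_mat n k" "i < n" "j < k"
  shows "(A * mat k k (\<lambda>(s, t). of_bool (s \<le> t))) $$ (i, j) = (\<Sum>t\<le>j. A $$ (i, t))"
proof -
  have "(A * mat k k (\<lambda>(s, t). of_bool (s \<le> t))) $$ (i, j) = (\<Sum>t<k. A $$ (i, t) * of_bool (t \<le> j))"
    using assms by (simp add: scalar_prod_def atLeast0LessThan)
  also have "\<dots> = (\<Sum>t\<le>j. A $$ (i, t))"
    using assms by (intro sum.mono_neutral_cong_right) auto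
  finally show ?thesis .
qed

lemma index_one_minus_shift_mat_mult:
  fixes A :: "'a::comm_ring_1 mat"
  assumes "A \<in> carrier_mat k n" "s < k" "j < n"
  shows "(mat k k (\<lambda>(s, t). of_bool (s = t) - of_bool (t = Suc s)) * A) $$ (s, j)
       = A $$ (s, j) - (if Suc s < k then A $$ (Suc s, j) else 0)"
proof -
  have "(mat k k (\<lambda>(s, t). of_bool (s = t) - of_bool (t = Suc s)) * A) $$ (s, j)
      = (\<Sum>t<k. (of_bool (s = t) - of_bool (t = Suc s)) * A $$ (t, j))"
    using assms by (simp add: scalar_prod_def atLeast0LessThan)
  also have "\<dots> = A $$ (s, j) - (if Suc s < k then A $$ (Suc s, j) else 0)"
    using assms by (simp add: left_diff_distrib sum_subtractf)
  finally show ?thesis .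
qed

lemma det_scalar_plus_rank_one:
  fixes c :: "'a::comm_ring_1" and m :: "nat \<Rightarrow> 'a"
  assumes "0 < k"
  shows "det (mat k k (\<lambda>(s, t). (if s = t then c else 0) + m t)) = c ^ (k - 1) * (c + (\<Sum>t<k. m t))"
proof -
  define Q where "Q = mat k k (\<lambda>(s, t). (if s = t then c else 0) + m t)"
  \<comment> \<open>Differences of consecutive rows and prefix sums of columns make L * Q * R lower triangular.\<close>
  define L where "L = (mat k k (\<lambda>(s, t). of_bool (s = t) - of_bool (t = Suc s)) :: 'a mat)"
  define R where "R = (mat k k (\<lambda>(s, t). of_bool (s \<le> t)) :: 'a mat)"
  define Y where "Y = L * (Q * R)"
  have QR: "Q * R \<in> carrier_mat k k" and Y_carrier: "Y \<in> carrier_mat k k"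
    unfolding Y_def L_def Q_def R_def by (auto intro!: mult_carrier_mat[of _ k k])
  have QR_index: "(Q * R) $$ (s, j) = (if s \<le> j then c else 0) + (\<Sum>t\<le>j. m t)" if "s < k" "j < k" for s j
  proof -
    have "(Q * R) $$ (s, j) = (\<Sum>t\<le>j. Q $$ (s, t))"
      unfolding R_def using that by (intro index_mult_upper_ones_mat) (auto simp: Q_def)
    also have "\<dots> = (\<Sum>t\<le>j. (if s = t then c else 0) + m t)"
      using that by (intro sum.cong) (auto simp: Q_def)
    finally show ?thesis by (simp add: sum.distrib)
  qed
  have Y: "Y $$ (s, j) = (if Suc s < k then (if s = j then c else 0) else (if s \<le> j then c else 0) + (\<Sum>t\<le>j. m t))"
    if "s < k" "j < k" for s j
  proof -
    have "Y $$ (s, j) = (Q * R) $$ (s, j) - (if Suc s < k then (Q * R) $$ (Suc s, j) else 0)"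
      unfolding Y_def L_def using QR that by (rule index_one_minus_shift_mat_mult)
    then show ?thesis using that by (cases "Suc s < k") (auto simp: QR_index)
  qed
  have "det Q = det Y"
    unfolding Y_def using QR
    by (simp add: det_mult[of _ k] det_unit_upper_triangular[of _ k] L_def R_def Q_def)
  also have "\<dots> = prod_list (diag_mat Y)"
    using Y Y_carrier by (intro det_lower_triangular[of k]) auto
  also have "\<dots> = (\<Prod>s<k. if Suc s < k then c else c + (\<Sum>t<k. m t))"
  proof -
    have "{..s} = {..<k}" if "s < k" "\<not> Suc s < k" for s using that by auto
    then show ?thesis
      using Y_carrier by (auto simp: prod_list_diag_prod Y atLeast0LessThan intro!: prod.cong)
  qed
  also have "\<dots> = c ^ (k - 1) * (c + (\<Sum>t<k. m t))"
    using \<open>0 < k\<close> by (cases k) (simp_all add: lessThan_Suc)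
  finally show ?thesis by (simp add: Q_def)
qed

section \<open>Complete multipartite graphs\<close>

lemma gdist_self: "u \<in> V \<Longrightarrow> gdist V E u u = 0"
  unfolding gdist_def by (rule Least_eq_0, rule exI[of _ "[u]"]) (simp add: is_walk_def)

lemma gdist_adjacent:
  assumes "u \<in> V" "v \<in> V" "E u v" "u \<noteq> v"
  shows "gdist V E u v = 1"
  unfolding gdist_def
proof (rule Least_equality)
  show "\<exists>xs. is_walk V E xs \<and> hd xs = u \<and> last xs = v \<and> length xs = Suc 1"
    using assms by (intro exI[of _ "[u, v]"]) (auto simp: is_walk_def less_Suc_eq)
next
  fix l assume "\<exists>xs. is_walk V E xs \<and> hd xs = u \<and> last xs = v \<and> length xs = Suc l"
  then show "1 \<le> l"
    using \<open>u \<noteq> v\<close> by (cases l) (auto simp: length_Suc_conv)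
qed

lemma gdist_common_neighbour:
  assumes "u \<in> V" "v \<in> V" "w \<in> V" "E u w" "E w v" "\<not> E u v" "u \<noteq> v"
  shows "gdist V E u v = 2"
  unfolding gdist_def
proof (rule Least_equality)
  show "\<exists>xs. is_walk V E xs \<and> hd xs = u \<and> last xs = v \<and> length xs = Suc 2"
    using assms by (intro exI[of _ "[u, w, v]"]) (auto simp: is_walk_def less_Suc_eq)
next
  fix l assume "\<exists>xs. is_walk V E xs \<and> hd xs = u \<and> last xs = v \<and> length xs = Suc l"
  then obtain xs where "is_walk V E xs" "hd xs = u" "last xs = v" "length xs = Suc l" by blast
  then show "2 \<le> l"
    using \<open>\<not> E u v\<close> \<open>u \<noteq> v\<close>
    by (cases l; cases "l - 1") (auto simp: length_Suc_conv is_walk_def)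
qed

lemma gdist_complete_multipartite:
  assumes adj: "\<And>u v. u \<in> V \<Longrightarrow> v \<in> V \<Longrightarrow> E u v \<longleftrightarrow> q u \<noteq> q v"
    and other_part: "\<exists>w\<in>V. q w \<noteq> q u" and "u \<in> V" "v \<in> V"
  shows "gdist V E u v = (if u = v then 0 else if q u = q v then 2 else 1)"
proof -
  obtain w where "w \<in> V" "q w \<noteq> q u" using other_part by blast
  then show ?thesis
    using assms gdist_self[of u V E] gdist_adjacent[of u V v E]
      gdist_common_neighbour[of u V v w E] by auto
qed

lemma transmission_complete_multipartite:
  assumes "finite V" and adj: "\<And>u v. u \<in> V \<Longrightarrow> v \<in> V \<Longrightarrow> E u v \<longleftrightarrow> q u \<noteq> q v"
    and other_part: "\<And>u. u \<in> V \<Longrightarrow> \<exists>w\<in>V. q w \<noteq> q u" and "v \<in> V"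
  shows "transmission V E v + 2 = card V + card {u \<in> V. q u = q v}"
proof -
  have "transmission V E v + 2 = (\<Sum>u\<in>V. gdist V E u v + (if u = v then 2 else 0))"
    using assms by (simp add: transmission_def sum.distrib)
  also have "\<dots> = (\<Sum>u\<in>V. 1) + (\<Sum>u\<in>V. if q u = q v then 1 else 0)"
    unfolding sum.distrib[symmetric] using assms by (intro sum.cong) (auto simp: gdist_complete_multipartite)
  also have "\<dots> = card V + card {u \<in> V. q u = q v}"
    using assms by (simp add: sum.distrib sum.If_cases Int_def)
  finally show ?thesis .
qed

lemma char_poly_dist_laplacian_enumeration:
  assumes "finite V" "distinct us" "set us = V"
  shows "char_poly (dist_laplacian V E) = char_poly (mat (length us) (length us) (\<lambda>(i, j).
           (if us ! i = us ! j then real (transmission V E (us ! i)) else 0) - real (gdist V E (us ! i) (us ! j))))"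
proof -
  define vs where "vs = vertex_list V"
  have vs: "distinct vs \<and> set vs = V"
    using someI_ex[of "\<lambda>xs. distinct xs \<and> set xs = V"] finite_distinct_list[OF \<open>finite V\<close>]
    unfolding vs_def vertex_list_def by blast
  have "dist_laplacian V E = mat (length vs) (length vs) (\<lambda>(i, j).
           (if vs ! i = vs ! j then real (transmission V E (vs ! i)) else 0) - real (gdist V E (vs ! i) (vs ! j)))"
    using vs by (intro eq_matI) (auto simp: dist_laplacian_def vs_def[symmetric] nth_eq_iff_index_eq)
  then show ?thesis
    using vs assms char_poly_mat_of_enumeration[of vs us
        "\<lambda>u v. (if u = v then real (transmission V E u) else 0) - real (gdist V E u v)"]
    by simp
qed

lemma card_indices_filter:
  "distinct xs \<Longrightarrow> card {i. i < length xs \<and> P (xs ! i)} = card {x \<in> set xs. P x}"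
  by (simp add: length_filter_conv_card[symmetric] distinct_length_filter Int_def conj_commute)

lemma obtain_enumeration_ending_in_representatives:
  assumes "finite V" "q ` V = {..<k}"
  obtains us where "distinct us" "set us = V" "\<And>t. t < k \<Longrightarrow> q (us ! (length us - k + t)) = t"
proof -
  define r where "r t = (SOME v. v \<in> V \<and> q v = t)" for t
  have r: "r t \<in> V \<and> q (r t) = t" if "t < k" for t
  proof -
    have "t \<in> q ` V" using assms(2) that by simp
    then have "\<exists>v. v \<in> V \<and> q v = t" by blast
    then show ?thesis unfolding r_def by (rule someI_ex[where P = "\<lambda>v. v \<in> V \<and> q v = t"])
  qed
  define rs where "rs = map r [0..<k]"
  have "inj_on r {0..<k}"
  proof (rule inj_onI)
    fix s t assume s: "s \<in> {0..<k}" and t: "t \<in> {0..<k}" and eq: "r s = r t"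
    have "s = q (r s)" using r[of s] s by simp
    also have "\<dots> = t" using r[of t] t eq by simp
    finally show "s = t" .
  qed
  then have rs: "distinct rs" "set rs \<subseteq> V" "length rs = k"
    using r by (auto simp: rs_def distinct_map)
  obtain ws where ws: "distinct ws" "set ws = V - set rs"
    using finite_distinct_list[of "V - set rs"] assms(1) by blast
  show ?thesis
  proof
    show "distinct (ws @ rs)" and "set (ws @ rs) = V" using rs ws by auto
    show "q ((ws @ rs) ! (length (ws @ rs) - k + t)) = t" if "t < k" for t
      using that rs r by (simp add: nth_append rs_def)
  qed
qed

lemma char_poly_dist_laplacian_complete_multipartite_enumeration:
  fixes q :: "'a \<Rightarrow> nat"
  assumes fin: "finite V" and adj: "\<And>u v. u \<in> V \<Longrightarrow> v \<in> V \<Longrightarrow> E u v \<longleftrightarrow> q u \<noteq> q v"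
    and other_part: "\<And>u. u \<in> V \<Longrightarrow> \<exists>w\<in>V. q w \<noteq> q u"
    and us: "distinct us" "set us = V"
  shows "char_poly (dist_laplacian V E) = det (diag_plus_block_mat (card V) (\<lambda>i. q (us ! i))
           (\<lambda>t. [:- real (card V + card {v \<in> V. q v = t}), 1:]) (\<lambda>s t. [: if s = t then 2 else 1 :]))"
proof -
  have len: "length us = card V" using us distinct_card by metis
  have us_in: "us ! i \<in> V" if "i < card V" for i using that us len by auto
  have gdist: "gdist V E u v = (if u = v then 0 else if q u = q v then 2 else 1)" if "u \<in> V" "v \<in> V" for u v
    using adj other_part[OF that(1)] that by (rule gdist_complete_multipartite)
  have transmission: "real (transmission V E u) = real (card V) + real (card {v \<in> V. q v = q u}) - 2"
    if "u \<in> V" for u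
    using transmission_complete_multipartite[OF fin adj other_part that] by simp
  show ?thesis
    unfolding char_poly_dist_laplacian_enumeration[OF fin us] len unfolding char_poly_def
    using us(1) len by (intro arg_cong[of _ _ det] eq_matI) (auto simp: char_poly_matrix_def
      diag_plus_block_mat_def nth_eq_iff_index_eq us_in gdist transmission)
qed

lemma exists_other_part:
  fixes q :: "'a \<Rightarrow> nat"
  assumes "q ` V = {..<k}" "2 \<le> k"
  shows "\<exists>w\<in>V. q w \<noteq> q u"
proof -
  have "0 \<in> q ` V" "1 \<in> q ` V" using assms by auto
  then show ?thesis by (metis imageE zero_neq_one)
qed

lemma sum_card_parts:
  fixes q :: "'a \<Rightarrow> nat"
  assumes "finite V" "q ` V = {..<k}"
  shows "(\<Sum>t<k. card {v \<in> V. q v = t}) = card V"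
  using sum.image_gen[OF assms(1), of "\<lambda>_. 1::nat" q] assms(2) by simp

theorem char_poly_dist_laplacian_complete_multipartite:
  fixes V :: "'a set" and q :: "'a \<Rightarrow> nat"
  assumes fin: "finite V" and parts: "q ` V = {..<k}" and "2 \<le> k"
    and adj: "\<And>u v. u \<in> V \<Longrightarrow> v \<in> V \<Longrightarrow> E u v \<longleftrightarrow> q u \<noteq> q v"
  shows "char_poly (dist_laplacian V E) = [:0, 1:] * [:- real (card V), 1:] ^ (k - 1)
           * (\<Prod>t<k. [:- real (card V + card {v \<in> V. q v = t}), 1:] ^ (card {v \<in> V. q v = t} - 1))"
proof -
  define N where "N = card V"
  define m where "m t = card {v \<in> V. q v = t}" for t
  obtain us where us: "distinct us" "set us = V"
    and rep: "\<And>t. t < k \<Longrightarrow> q (us ! (length us - k + t)) = t"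
    using obtain_enumeration_ending_in_representatives[OF fin parts] by blast
  have len: "length us = N" using us distinct_card N_def by metis
  have kN: "k \<le> N" using card_image_le[OF fin, of q] parts by (simp add: N_def)
  define p where "p i = q (us ! i)" for i
  have part: "p i < k" if "i < N" for i using that us len parts by (auto simp: p_def)
  have rep_p: "p (N - k + t) = t" if "t < k" for t using rep[OF that] len by (simp add: p_def)
  have card_p: "card {i. i < N \<and> p i = t} = m t" for t
    using card_indices_filter[OF us(1)] us len by (simp add: p_def m_def)
  have other_part: "\<exists>w\<in>V. q w \<noteq> q u" if "u \<in> V" for u
    using parts \<open>2 \<le> k\<close> by (rule exists_other_part)
  have "char_poly (dist_laplacian V E)
      = det (diag_plus_block_mat N p (\<lambda>t. [:- real (N + m t), 1:]) (\<lambda>s t. [: if s = t then 2 else 1 :]))"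
    unfolding N_def m_def p_def
    using fin adj other_part us by (rule char_poly_dist_laplacian_complete_multipartite_enumeration)
  also have "\<dots> = (\<Prod>i<N - k. [:- real (N + m (p i)), 1:]) * det (mat k k (\<lambda>(s, t).
      (if s = t then [:- real (N + m s), 1:] else 0) + of_nat (card {l. l < N \<and> p l = t}) * [: if s = t then 2 else 1 :]))"
    using kN part rep_p by (rule det_diag_plus_block_mat)
  also have "mat k k (\<lambda>(s, t). (if s = t then [:- real (N + m s), 1:] else 0)
        + of_nat (card {l. l < N \<and> p l = t}) * [: if s = t then 2 else 1 :])
      = mat k k (\<lambda>(s, t). (if s = t then [:- real N, 1:] else 0) + of_nat (m t))"
    by (intro eq_matI) (auto simp: card_p of_nat_poly)
  also have "det \<dots> = [:- real N, 1:] ^ (k - 1) * ([:- real N, 1:] + (\<Sum>t<k. of_nat (m t)))"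
    using \<open>2 \<le> k\<close> by (intro det_scalar_plus_rank_one) simp
  also have "(\<Sum>t<k. of_nat (m t)) = (of_nat N :: real poly)"
    using sum_card_parts[OF fin parts] by (simp add: N_def m_def flip: of_nat_sum)
  also have "(\<Prod>i<N - k. [:- real (N + m (p i)), 1:]) = (\<Prod>t<k. [:- real (N + m t), 1:] ^ (m t - 1))"
    using prod_nonrepresentatives[OF kN part rep_p] by (simp add: card_p)
  finally show ?thesis by (simp add: N_def m_def of_nat_poly mult.commute mult.left_commute)
qed

section \<open>The non-commuting graph of U_6n\<close>

definition U6n_part :: "nat \<times> nat \<Rightarrow> nat" where
  "U6n_part v = (if even (fst v) then 0 else snd v + 1)"

lemma U6n_mult_commute_iff:
  "U6n_mult n (i, j) (i', j') = U6n_mult n (i', j') (i, j) \<longleftrightarrow>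
     ((if even i' then j else 2 * j) + j') mod 3 = ((if even i then j' else 2 * j') + j) mod 3"
  by (simp add: U6n_mult_def add.commute)

lemma centre_U6n:
  assumes "1 \<le> n"
  shows "centre (U6n_carrier n) (U6n_mult n) = {(i, j). i < 2 * n \<and> even i \<and> j = (0::nat)}"
proof (intro equalityI subsetI)
  fix z :: "nat \<times> nat" assume z: "z \<in> centre (U6n_carrier n) (U6n_mult n)"
  obtain i j where z_eq: "z = (i, j)" by (cases z)
  have ij: "i < 2 * n" "j < 3" using z z_eq by (auto simp: centre_def U6n_carrier_def)
  have "(1, 0) \<in> U6n_carrier n" "(0, 1) \<in> U6n_carrier n" using assms by (auto simp: U6n_carrier_def)
  then have "U6n_mult n (i, j) (1, 0) = U6n_mult n (1, 0) (i, j)"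
    and "U6n_mult n (i, j) (0, 1) = U6n_mult n (0, 1) (i, j)"
    using z z_eq by (auto simp: centre_def)
  moreover have "j = 0 \<or> j = 1 \<or> j = 2" using ij by auto
  ultimately show "z \<in> {(i, j). i < 2 * n \<and> even i \<and> j = 0}"
    using z_eq ij by (auto simp: U6n_mult_commute_iff split: if_splits)
next
  fix z :: "nat \<times> nat" assume "z \<in> {(i, j). i < 2 * n \<and> even i \<and> j = 0}"
  then show "z \<in> centre (U6n_carrier n) (U6n_mult n)"
    by (auto simp: centre_def U6n_carrier_def U6n_mult_commute_iff)
qed

lemma nc_vertices_U6n:
  assumes "1 \<le> n"
  shows "nc_vertices (U6n_carrier n) (U6n_mult n) = {(i, j). i < 2 * n \<and> j < 3 \<and> (odd i \<or> j \<noteq> 0)}"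
  unfolding nc_vertices_def centre_U6n[OF assms] by (auto simp: U6n_carrier_def)

lemma U6n_commute_iff_same_part:
  assumes "j < 3" "j' < 3" "odd i \<or> j \<noteq> 0" "odd i' \<or> j' \<noteq> 0"
  shows "U6n_mult n (i, j) (i', j') = U6n_mult n (i', j') (i, j) \<longleftrightarrow> U6n_part (i, j) = U6n_part (i', j')"
proof -
  have "j = 0 \<or> j = 1 \<or> j = 2" "j' = 0 \<or> j' = 1 \<or> j' = 2" using assms by auto
  then show ?thesis using assms unfolding U6n_mult_commute_iff U6n_part_def by auto
qed

lemma nc_adj_U6n_iff:
  assumes "1 \<le> n" and "u \<in> nc_vertices (U6n_carrier n) (U6n_mult n)" "v \<in> nc_vertices (U6n_carrier n) (U6n_mult n)"
  shows "nc_adj (U6n_carrier n) (U6n_mult n) u v \<longleftrightarrow> U6n_part u \<noteq> U6n_part v"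
proof -
  obtain i j i' j' where uv: "u = (i, j)" "v = (i', j')" by (cases u, cases v)
  then have "j < 3" "j' < 3" "odd i \<or> j \<noteq> 0" "odd i' \<or> j' \<noteq> 0"
    using assms by (auto simp: nc_vertices_U6n)
  from U6n_commute_iff_same_part[OF this, of n] show ?thesis
    using assms(2,3) uv by (auto simp: nc_adj_def)
qed

lemma card_even_below_double: "card {i::nat. i < 2 * n \<and> even i} = n"
proof -
  have "{i::nat. i < 2 * n \<and> even i} = (\<lambda>k. 2 * k) ` {..<n}" by (auto elim!: evenE)
  then show ?thesis by (simp add: card_image inj_on_def)
qed

lemma card_odd_below_double: "card {i::nat. i < 2 * n \<and> odd i} = n"
proof -
  have "{i::nat. i < 2 * n \<and> odd i} = (\<lambda>k. 2 * k + 1) ` {..<n}" by (auto elim!: oddE)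
  then show ?thesis by (simp add: card_image inj_on_def)
qed

lemma U6n_part_image:
  assumes "1 \<le> n"
  shows "U6n_part ` nc_vertices (U6n_carrier n) (U6n_mult n) = {..<4}"
proof (intro equalityI subsetI)
  fix t :: nat assume "t \<in> {..<4}"
  then have "t = U6n_part (if t = 0 then (0, 1) else (1, t - 1))"
    and "(if t = 0 then (0, 1) else (1, t - 1)) \<in> nc_vertices (U6n_carrier n) (U6n_mult n)"
    using assms by (auto simp: U6n_part_def nc_vertices_U6n)
  then show "t \<in> U6n_part ` nc_vertices (U6n_carrier n) (U6n_mult n)" by blast
qed (auto simp: U6n_part_def nc_vertices_U6n[OF assms])

lemma card_U6n_part:
  assumes "1 \<le> n" and "t < 4"
  shows "card {v \<in> nc_vertices (U6n_carrier n) (U6n_mult n). U6n_part v = t} = (if t = 0 then 2 * n else n)"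
proof (cases "t = 0")
  case True
  then have "{v \<in> nc_vertices (U6n_carrier n) (U6n_mult n). U6n_part v = t} = {i. i < 2 * n \<and> even i} \<times> {1, 2}"
    using assms by (auto simp: nc_vertices_U6n U6n_part_def)
  then show ?thesis using True by (simp add: card_cartesian_product card_even_below_double)
next
  case False
  then have "{v \<in> nc_vertices (U6n_carrier n) (U6n_mult n). U6n_part v = t} = (\<lambda>i. (i, t - 1)) ` {i. i < 2 * n \<and> odd i}"
    using assms by (auto simp: nc_vertices_U6n U6n_part_def)
  then show ?thesis using False by (simp add: card_image inj_on_def card_odd_below_double)
qed

lemma card_nc_vertices_U6n:
  assumes "1 \<le> n"
  shows "card (nc_vertices (U6n_carrier n) (U6n_mult n)) = 5 * n"
proof -
  have "centre (U6n_carrier n) (U6n_mult n) = (\<lambda>i. (i, 0)) ` {i. i < 2 * n \<and> even i}"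
    using centre_U6n[OF assms] by auto
  then have "card (centre (U6n_carrier n) (U6n_mult n)) = n"
    by (simp add: card_image inj_on_def card_even_below_double)
  moreover have "centre (U6n_carrier n) (U6n_mult n) \<subseteq> U6n_carrier n" by (auto simp: centre_def)
  ultimately show ?thesis
    by (simp add: nc_vertices_def card_Diff_subset finite_subset U6n_carrier_def card_cartesian_product)
qed

theorem theorem5p2:
  fixes n :: nat
  assumes "n \<ge> 1"
  shows "char_poly (dist_laplacian (nc_vertices (U6n_carrier n) (U6n_mult n))
                                   (nc_adj (U6n_carrier n) (U6n_mult n)))
         = [:0, 1:]
           * [:- (5 * real n), 1:] ^ 3
           * [:- (6 * real n), 1:] ^ (3 * (n - 1))
           * [:- (7 * real n), 1:] ^ (2 * n - 1)"
proof -
  let ?V = "nc_vertices (U6n_carrier n) (U6n_mult n)"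
  have "finite ?V"
    by (rule finite_subset[of _ "U6n_carrier n"]) (auto simp: nc_vertices_def U6n_carrier_def)
  then have "char_poly (dist_laplacian ?V (nc_adj (U6n_carrier n) (U6n_mult n)))
      = [:0, 1:] * [:- real (card ?V), 1:] ^ (4 - 1)
        * (\<Prod>t<4. [:- real (card ?V + card {v \<in> ?V. U6n_part v = t}), 1:] ^ (card {v \<in> ?V. U6n_part v = t} - 1))"
    using U6n_part_image[OF assms] nc_adj_U6n_iff[OF assms]
    by (intro char_poly_dist_laplacian_complete_multipartite) auto
  also have "\<dots> = [:0, 1:] * [:- (5 * real n), 1:] ^ 3
      * ([:- (7 * real n), 1:] ^ (2 * n - 1) * ([:- (6 * real n), 1:] ^ (n - 1)) ^ 3)"
    by (simp add: card_nc_vertices_U6n[OF assms] card_U6n_part[OF assms] numeral_eq_Suc lessThan_Suc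
        power3_eq_cube algebra_simps)
  also have "([:- (6 * real n), 1:] ^ (n - 1)) ^ 3 = [:- (6 * real n), 1:] ^ (3 * (n - 1))"
    by (metis power_mult mult.commute)
  finally show ?thesis by (simp add: ac_simps)
qed

end
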